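(* Let $t$ be an $\mathrm{SL}_2$-tiling with enough ones. Then there exist $(x_\alpha,y_\alpha)\in\mathbb{Z}\times\mathbb{Z}$ for $\alpha\in\mathbb{Z}$ such that: (i) $t_{xy}=1$ if and only if $(x,y)=(x_\alpha,y_\alpha)$ for some $\alpha$; (ii) for each $\alpha$, either (a) $x_{\alpha+1}<x_\alpha$ and $y_{\alpha+1}=y_\alpha$, or (b) $x_{\alpha+1}=x_\alpha$ and $y_{\alpha+1}>y_\alpha$; (iii) as $\alpha\to\infty$ and as $\alpha\to-\infty$, there are infinitely many switches between options (a) and (b). Moreover, the $(x_\alpha,y_\alpha)$ with these properties are unique up to replacing $\alpha$ by $\alpha+k$ for a constant integer $k$.
   Context: An $\mathrm{SL}_2$-tiling is a map $t:\mathbb{Z}\times\mathbb{Z}\to\{1,2,3,\dots\}$, $(i,j)\mapsto t_{ij}$, with $t_{ij}t_{i+1,j+1}-t_{i,j+1}t_{i+1,j}=1$ for all $i,j$. It has enough ones if for every $(i,j)$ there is $(p,q)$ with $p<i,\ q>j$ and $t_{pq}=1$, and there is $(p,q)$ with $p>i,\ q<j$ and $t_{pq}=1$. *)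

theory Defs
  imports Main
begin

definition sl2_tiling :: "(int \<Rightarrow> int \<Rightarrow> int) \<Rightarrow> bool" where
  "sl2_tiling t \<longleftrightarrow> (\<forall>i j. t i j \<ge> 1) \<and>
     (\<forall>i j. t i j * t (i+1) (j+1) - t i (j+1) * t (i+1) j = 1)"

definition enough_ones :: "(int \<Rightarrow> int \<Rightarrow> int) \<Rightarrow> bool" where
  "enough_ones t \<longleftrightarrow> (\<forall>i j.
     (\<exists>p q. p < i \<and> q > j \<and> t p q = 1) \<and>
     (\<exists>p q. p > i \<and> q < j \<and> t p q = 1))"

definition step_a :: "(int \<Rightarrow> int) \<Rightarrow> (int \<Rightarrow> int) \<Rightarrow> int \<Rightarrow> bool" where
  "step_a x y a \<longleftrightarrow> x (a+1) < x a \<and> y (a+1) = y a"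

definition step_b :: "(int \<Rightarrow> int) \<Rightarrow> (int \<Rightarrow> int) \<Rightarrow> int \<Rightarrow> bool" where
  "step_b x y a \<longleftrightarrow> x (a+1) = x a \<and> y (a+1) > y a"

definition switch_at :: "(int \<Rightarrow> int) \<Rightarrow> (int \<Rightarrow> int) \<Rightarrow> int \<Rightarrow> bool" where
  "switch_at x y a \<longleftrightarrow> (step_a x y a \<and> step_b x y (a+1)) \<or> (step_b x y a \<and> step_a x y (a+1))"

definition ones_param :: "(int \<Rightarrow> int \<Rightarrow> int) \<Rightarrow> (int \<Rightarrow> int) \<Rightarrow> (int \<Rightarrow> int) \<Rightarrow> bool" where
  "ones_param t x y \<longleftrightarrow>
     (\<forall>p q. t p q = 1 \<longleftrightarrow> (\<exists>a. p = x a \<and> q = y a)) \<and>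
     (\<forall>a. step_a x y a \<or> step_b x y a) \<and>
     (\<forall>N. \<exists>a\<ge>N. switch_at x y a) \<and>
     (\<forall>N. \<exists>a\<le>N. switch_at x y a)"

end

theory Submission
  imports Defs "HOL-Library.Infinite_Set" Complex_Main
begin

text \<open>Every 2x2 minor of an SL2-tiling is positive, so no two ones (p, q), (p', q') satisfy
  p < p' and q < q'. Hence the ones are strictly ordered by their diagonal q - p, and indexing them
  by an increasing enumeration of these diagonals gives the sequence, unique up to a shift. Consecutive
  ones differ in one coordinate only: otherwise they would be opposite corners of a rectangle
  containing no further one, which is impossible, since such a rectangle always contains a column
  with frieze coefficient 1 and deleting it yields a narrower rectangle of the same kind. Enough ones
  makes both coordinates unbounded in both directions along the sequence, which forces infinitely
  many switches.\<close>

lemma strict_mono_int_step: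
  fixes f :: "int \<Rightarrow> 'a::order"
  assumes "\<And>a. f a < f (a + 1)"
  shows "strict_mono f"
proof
  fix a b :: int
  assume "a < b"
  then show "f a < f b"
  proof (induction b rule: int_gr_induct)
    case base
    show ?case using assms by simp
  next
    case (step b)
    then show ?case using assms[of b] by order
  qed
qed

lemma mono_int_step:
  fixes f :: "int \<Rightarrow> 'a::order"
  assumes "\<And>a. f a \<le> f (a + 1)"
  shows "mono f"
proof
  fix a b :: int
  assume "a \<le> b"
  then show "f a \<le> f b"
  proof (induction b rule: int_ge_induct)
    case (step b)
    then show ?case using assms[of b] by order
  qed simp
qed

lemma antimono_int_step:
  fixes f :: "int \<Rightarrow> 'a::order"
  assumes "\<And>a. f (a + 1) \<le> f a"
  shows "antimono f"
proof
  fix a b :: int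
  assume "a \<le> b"
  then show "f b \<le> f a"
  proof (induction b rule: int_ge_induct)
    case (step b)
    then show ?case using assms[of b] by order
  qed simp
qed

lemma const_from_int_step:
  fixes f :: "int \<Rightarrow> 'a"
  assumes "\<And>a. N \<le> a \<Longrightarrow> f (a + 1) = f a" and "N \<le> a"
  shows "f a = f N"
  using assms(2) by (induction a rule: int_ge_induct) (simp_all add: assms(1))

lemma const_until_int_step:
  fixes f :: "int \<Rightarrow> 'a"
  assumes "\<And>a. a < N \<Longrightarrow> f (a + 1) = f a" and "a \<le> N"
  shows "f a = f N"
  using assms(2)
proof (induction a rule: int_le_induct)
  case (step a)
  then show ?case using assms(1)[of "a - 1"] by simp
qed simp

lemma strict_mono_range_step:
  fixes f :: "int \<Rightarrow> 'a::linorder"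
  assumes "strict_mono f" and "s \<in> range f"
  shows "f a < s \<longleftrightarrow> f (a + 1) \<le> s"
proof -
  obtain b where s: "s = f b" using assms(2) by blast
  have "f a < f b \<longleftrightarrow> a < b" by (rule strict_mono_less[OF assms(1)])
  also have "\<dots> \<longleftrightarrow> a + 1 \<le> b" by arith
  also have "\<dots> \<longleftrightarrow> f (a + 1) \<le> f b" by (rule strict_mono_less_eq[OF assms(1), symmetric])
  finally show ?thesis using s by simp
qed

lemma strict_mono_same_range_shift:
  fixes f g :: "int \<Rightarrow> 'a::linorder"
  assumes f: "strict_mono f" and g: "strict_mono g" and range: "range f = range g"
  shows "\<exists>k. \<forall>a. g a = f (a + k)"
proof -
  have succ: "f (a + 1) = g (b + 1)" if "f a = g b" for a b
  proof (rule antisym)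
    show "f (a + 1) \<le> g (b + 1)"
      using strict_mono_range_step[OF f, of "g (b + 1)" a] range that strict_mono_less[OF g]
      by (metis less_add_one rangeI)
    show "g (b + 1) \<le> f (a + 1)"
      using strict_mono_range_step[OF g, of "f (a + 1)" b] range that strict_mono_less[OF f]
      by (metis less_add_one rangeI)
  qed
  have pred: "f (a - 1) = g (b - 1)" if "f a = g b" for a b
  proof -
    have "g (b - 1) < f a" "f (a - 1) < g b"
      using that strict_mono_less[OF f, of "a - 1" a] strict_mono_less[OF g, of "b - 1" b] by simp_all
    moreover have "g (b - 1) \<in> range f" "f (a - 1) \<in> range g"
      using range by (metis rangeI)+
    ultimately have "\<not> f (a - 1) < g (b - 1)" "\<not> g (b - 1) < f (a - 1)"
      using strict_mono_range_step[OF f, of "g (b - 1)" "a - 1"]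
        strict_mono_range_step[OF g, of "f (a - 1)" "b - 1"] that by auto
    then show ?thesis by simp
  qed
  obtain k where k: "f k = g 0" using range by (metis rangeE rangeI)
  have "g a = f (a + k)" for a
  proof (induction a rule: int_induct[where k = 0])
    case (step1 a)
    then show ?case using succ[of "a + k" a] by (simp add: algebra_simps)
  next
    case (step2 a)
    then show ?case using pred[of "a + k" a] by (simp add: algebra_simps)
  qed (simp add: k)
  then show ?thesis by blast
qed

lemma strict_mono_int_enumeration:
  fixes S :: "int set"
  assumes up: "\<And>v. \<exists>s\<in>S. v < s" and down: "\<And>v. \<exists>s\<in>S. s < v"
  obtains f :: "int \<Rightarrow> int" where "strict_mono f" and "range f = S"
proof -
  obtain s0 where s0: "s0 \<in> S" using up by blast
  define A where "A = {n. s0 + int n \<in> S}"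
  define B where "B = {n. s0 - 1 - int n \<in> S}"
  have "infinite A"
    unfolding infinite_nat_iff_unbounded
  proof
    fix m
    obtain s where "s \<in> S" "s0 + int m < s" using up by blast
    then show "\<exists>n>m. n \<in> A" unfolding A_def by (intro exI[of _ "nat (s - s0)"]) auto
  qed
  have "infinite B"
    unfolding infinite_nat_iff_unbounded
  proof
    fix m
    obtain s where "s \<in> S" "s < s0 - 1 - int m" using down by blast
    then show "\<exists>n>m. n \<in> B" unfolding B_def by (intro exI[of _ "nat (s0 - 1 - s)"]) auto
  qed
  txt \<open>Nonnegative indices enumerate S from s0 upwards, negative ones from s0 - 1 downwards.\<close>
  define f where "f a = (if 0 \<le> a then s0 + int (enumerate A (nat a))
                         else s0 - 1 - int (enumerate B (nat (- a - 1))))" for a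
  have "f a < f (a + 1)" for a
  proof (cases "0 \<le> a")
    case True
    then show ?thesis
      using enumerate_step[OF \<open>infinite A\<close>, of "nat a"] by (simp add: f_def nat_add_distrib)
  next
    case False
    show ?thesis
    proof (cases "a = -1")
      case False
      with \<open>\<not> 0 \<le> a\<close> have "nat (- a - 1) = Suc (nat (- (a + 1) - 1))" by simp
      then show ?thesis
        using \<open>\<not> 0 \<le> a\<close> False enumerate_step[OF \<open>infinite B\<close>, of "nat (- (a + 1) - 1)"]
        by (simp add: f_def)
    qed (simp add: f_def)
  qed
  then have "strict_mono f" by (rule strict_mono_int_step)
  moreover have "range f = S"
  proof
    show "range f \<subseteq> S"
      using enumerate_in_set[OF \<open>infinite A\<close>] enumerate_in_set[OF \<open>infinite B\<close>]
      by (auto simp: f_def A_def B_def)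
  next
    show "S \<subseteq> range f"
    proof
      fix s assume "s \<in> S"
      show "s \<in> range f"
      proof (cases "s0 \<le> s")
        case True
        then have "nat (s - s0) \<in> A" using \<open>s \<in> S\<close> by (simp add: A_def)
        then obtain n where "enumerate A n = nat (s - s0)" using enumerate_Ex[OF \<open>infinite A\<close>] by blast
        then have "f (int n) = s" using True by (simp add: f_def)
        then show ?thesis by (metis rangeI)
      next
        case False
        then have "nat (s0 - 1 - s) \<in> B" using \<open>s \<in> S\<close> by (simp add: B_def)
        then obtain n where "enumerate B n = nat (s0 - 1 - s)" using enumerate_Ex[OF \<open>infinite B\<close>] by blast
        then have "f (- int n - 1) = s" using False by (simp add: f_def)
        then show ?thesis by (metis rangeI)
      qed
    qed
  qed
  ultimately show ?thesis by (rule that)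
qed

section \<open>Minors and ones of SL2-tilings\<close>

lemma sl2_tiling_pos: "sl2_tiling t \<Longrightarrow> 0 < t i j"
  by (simp add: sl2_tiling_def int_one_le_iff_zero_less)

lemma sl2_tiling_det: "sl2_tiling t \<Longrightarrow> t i j * t (i + 1) (j + 1) - t i (j + 1) * t (i + 1) j = 1"
  by (simp add: sl2_tiling_def)

lemma of_int_divide_less_iff:
  fixes a b c d :: int
  assumes "0 < b" and "0 < d"
  shows "real_of_int a / real_of_int b < real_of_int c / real_of_int d \<longleftrightarrow> a * d < c * b"
proof -
  have "real_of_int a / real_of_int b < real_of_int c / real_of_int d \<longleftrightarrow>
        real_of_int a * real_of_int d < real_of_int c * real_of_int b"
    using assms by (simp add: divide_simps)
  also have "\<dots> \<longleftrightarrow> a * d < c * b" by (metis of_int_less_iff of_int_mult)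
  finally show ?thesis .
qed

text \<open>The quotients t (p+1) q / t p q increase in q by the determinant condition, and then the
  quotients t p l / t p j increase in p.\<close>
lemma sl2_tiling_minor_pos:
  assumes T: "sl2_tiling t" and "i < k" and "j < l"
  shows "t i l * t k j < t i j * t k l"
proof -
  note pos = sl2_tiling_pos[OF T]
  define r where "r p q = real_of_int (t (p + 1) q) / real_of_int (t p q)" for p q
  have "strict_mono (r p)" for p
  proof (rule strict_mono_int_step)
    fix q
    have "t p (q + 1) * t (p + 1) q < t p q * t (p + 1) (q + 1)"
      using sl2_tiling_det[OF T, of p q] by linarith
    then show "r p q < r p (q + 1)"
      unfolding r_def using of_int_divide_less_iff pos by (simp add: mult.commute)
  qed
  then have "r p j < r p l" for p using \<open>j < l\<close> by (simp add: strict_mono_less)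
  then have row: "t p l * t (p + 1) j < t p j * t (p + 1) l" for p
    unfolding r_def using of_int_divide_less_iff pos by (simp add: mult.commute)
  define R where "R p = real_of_int (t p l) / real_of_int (t p j)" for p
  have "strict_mono R"
    by (rule strict_mono_int_step)
      (use row in \<open>simp add: R_def of_int_divide_less_iff pos mult.commute\<close>)
  then have "R i < R k" using \<open>i < k\<close> by (simp add: strict_mono_less)
  then show ?thesis unfolding R_def using of_int_divide_less_iff pos by (simp add: mult.commute)
qed

lemma sl2_tiling_ones_antichain:
  assumes T: "sl2_tiling t" and "t p q = 1" and "t p' q' = 1"
  shows "\<not> (p < p' \<and> q < q')"
proof
  assume "p < p' \<and> q < q'"
  then have "t p q' * t p' q < 1" using sl2_tiling_minor_pos[OF T] assms(2,3) by fastforce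
  moreover have "1 \<le> t p q' * t p' q"
    using sl2_tiling_pos[OF T, of p q'] sl2_tiling_pos[OF T, of p' q] by (metis int_one_le_iff_zero_less mult_pos_pos)
  ultimately show False by simp
qed

lemma sl2_tiling_ones_diagonal_le:
  assumes T: "sl2_tiling t" and "t p q = 1" and "t p' q' = 1" and "q - p \<le> q' - p'"
  shows "p' \<le> p \<and> q \<le> q'"
  using sl2_tiling_ones_antichain[OF T assms(2,3)] sl2_tiling_ones_antichain[OF T assms(3,2)] assms(4)
  by linarith

lemma sl2_tiling_ones_diagonal_eq:
  assumes T: "sl2_tiling t" and "t p q = 1" and "t p' q' = 1" and "q - p = q' - p'"
  shows "p = p' \<and> q = q'"
  using sl2_tiling_ones_diagonal_le[OF T assms(2,3)] sl2_tiling_ones_diagonal_le[OF T assms(3,2)] assms(4)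
  by simp

section \<open>Rectangles spanned by two ones\<close>

lemma unimodular_cell_dominance:
  fixes a b c d :: int
  assumes "b < a" and "1 \<le> b" and "1 \<le> c" and "1 \<le> d" and "a * d - b * c = 1"
  shows "d < c \<or> d = 1"
proof (rule ccontr)
  assume "\<not> (d < c \<or> d = 1)"
  then have "c \<le> d" and "2 \<le> d" using assms by auto
  then have "b * c \<le> b * d" and "d \<le> a * d - b * d"
    using assms mult_right_mono[of 1 "a - b" d] by (simp_all add: mult_left_mono algebra_simps)
  then show False using assms \<open>2 \<le> d\<close> by linarith
qed

lemma sl2_tiling_column_dominance:
  assumes T: "sl2_tiling t" and "k \<le> i" and "t k l < t k (l - 1)"
    and no_ones: "\<And>p. k < p \<Longrightarrow> p \<le> i \<Longrightarrow> t p l \<noteq> 1"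
  shows "t i l < t i (l - 1)"
proof -
  have "t p l < t p (l - 1)" if "k \<le> p" and "p \<le> i" for p
    using that
  proof (induction p rule: int_ge_induct)
    case (step p)
    have "t (p + 1) l < t (p + 1) (l - 1) \<or> t (p + 1) l = 1"
      by (rule unimodular_cell_dominance)
        (use step sl2_tiling_pos[OF T] sl2_tiling_det[OF T, of p "l - 1"] in
          \<open>auto simp: int_one_le_iff_zero_less\<close>)
    then show ?case using no_ones[of "p + 1"] step by auto
  qed (use assms(3) in simp)
  then show ?thesis using \<open>k \<le> i\<close> by simp
qed

lemma convex_int_seq_increasing:
  fixes g :: "int \<Rightarrow> int"
  assumes "g j < g (j + 1)" and convex: "\<And>q. j < q \<Longrightarrow> q < l \<Longrightarrow> 2 * g q \<le> g (q - 1) + g (q + 1)"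
    and "j \<le> q" and "q < l"
  shows "g q < g (q + 1)"
  using \<open>j \<le> q\<close> \<open>q < l\<close>
proof (induction q rule: int_ge_induct)
  case (step q)
  then show ?case using convex[of "q + 1"] by simp
qed (use assms(1) in simp)

lemma sl2_tiling_column_recurrence:
  assumes T: "sl2_tiling t"
  obtains c where "\<And>p. t p (q - 1) + t p (q + 1) = c * t p q"
proof -
  define C where "C p = t p (q - 1) * t (p + 1) (q + 1) - t p (q + 1) * t (p + 1) (q - 1)" for p
  have det1: "t p (q - 1) * t (p + 1) q - t p q * t (p + 1) (q - 1) = 1" for p
    using sl2_tiling_det[OF T, of p "q - 1"] by simp
  have det2: "t p q * t (p + 1) (q + 1) - t p (q + 1) * t (p + 1) q = 1" for p
    using sl2_tiling_det[OF T, of p q] by simp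
  have upper: "t p (q - 1) + t p (q + 1) = C p * t p q" for p
    using det1[of p] det2[of p] unfolding C_def by algebra
  have lower: "t (p + 1) (q - 1) + t (p + 1) (q + 1) = C p * t (p + 1) q" for p
    using det1[of p] det2[of p] unfolding C_def by algebra
  have "C (p + 1) = C p" for p
    using upper[of "p + 1"] lower[of p] sl2_tiling_pos[OF T, of "p + 1" q] by simp
  then have "C p = C 0" for p
    by (induction p rule: int_induct[where k = 0]) (simp_all add: algebra_simps, metis diff_add_cancel)
  then show ?thesis using that upper by metis
qed

lemma sl2_tiling_delete_column:
  assumes T: "sl2_tiling t" and unit: "\<And>p. t p (q0 - 1) + t p (q0 + 1) = t p q0"
  shows "sl2_tiling (\<lambda>p q. if q < q0 then t p q else t p (q + 1))" (is "sl2_tiling ?t")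
  unfolding sl2_tiling_def
proof (intro conjI allI)
  fix p q
  show "1 \<le> ?t p q" using sl2_tiling_pos[OF T] by (simp add: int_one_le_iff_zero_less)
  consider "q + 1 < q0" | "q = q0 - 1" | "q0 \<le> q" by linarith
  then show "?t p q * ?t (p + 1) (q + 1) - ?t p (q + 1) * ?t (p + 1) q = 1"
  proof cases
    case 1
    then show ?thesis using sl2_tiling_det[OF T, of p q] by simp
  next
    case 2
    have "t p (q0 - 1) * t (p + 1) q0 - t p q0 * t (p + 1) (q0 - 1) = 1"
      using sl2_tiling_det[OF T, of p "q0 - 1"] by simp
    then show ?thesis using 2 unit[of p] unit[of "p + 1"] by simp algebra
  next
    case 3
    then show ?thesis using sl2_tiling_det[OF T, of p "q + 1"] by (simp add: add.assoc)
  qed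
qed

text \<open>Column l - 1 dominates column l in every row of the rectangle, so row i cannot be convex
  between j and l; at a point of non-convexity the frieze coefficient is 1.\<close>
lemma sl2_tiling_empty_rectangle_unit_column:
  assumes T: "sl2_tiling t" and "k < i" and "j < l" and "t i j = 1" and "t k l = 1"
    and empty: "\<And>p q. k \<le> p \<Longrightarrow> p \<le> i \<Longrightarrow> j \<le> q \<Longrightarrow> q \<le> l \<Longrightarrow> t p q = 1 \<Longrightarrow>
                  (p, q) = (i, j) \<or> (p, q) = (k, l)"
  obtains q0 where "j < q0" and "q0 < l" and "\<And>p. t p (q0 - 1) + t p (q0 + 1) = t p q0"
proof -
  note pos = sl2_tiling_pos[OF T]
  have "t i l < t i (l - 1)"
  proof (rule sl2_tiling_column_dominance[OF T])
    show "k \<le> i" using \<open>k < i\<close> by simp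
    show "t k l < t k (l - 1)"
      using empty[of k "l - 1"] pos[of k "l - 1"] \<open>k < i\<close> \<open>j < l\<close> \<open>t k l = 1\<close> by fastforce
    show "t p l \<noteq> 1" if "k < p" "p \<le> i" for p
      using empty[of p l] that \<open>j < l\<close> by auto
  qed
  moreover have "t i j < t i (j + 1)"
    using empty[of i "j + 1"] pos[of i "j + 1"] \<open>k < i\<close> \<open>j < l\<close> \<open>t i j = 1\<close> by fastforce
  ultimately obtain q0 where q0: "j < q0" "q0 < l" "t i (q0 - 1) + t i (q0 + 1) < 2 * t i q0"
    using convex_int_seq_increasing[of "t i" j l "l - 1"] \<open>j < l\<close> by force
  obtain c where c: "\<And>p. t p (q0 - 1) + t p (q0 + 1) = c * t p q0"
    using sl2_tiling_column_recurrence[OF T] by blast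
  have "0 < c * t i q0" and "c * t i q0 < 2 * t i q0"
    using c[of i] q0(3) pos[of i "q0 - 1"] pos[of i "q0 + 1"] by linarith+
  then have "c = 1" using pos[of i q0] by (simp add: zero_less_mult_iff)
  then show ?thesis using that q0 c by simp
qed

lemma sl2_tiling_ones_rectangle:
  assumes "sl2_tiling t" and "k < i" and "j < l" and "t i j = 1" and "t k l = 1"
  shows "\<exists>p q. k \<le> p \<and> p \<le> i \<and> j \<le> q \<and> q \<le> l \<and> t p q = 1 \<and> (p, q) \<noteq> (i, j) \<and> (p, q) \<noteq> (k, l)"
  using assms
proof (induction "nat (l - j)" arbitrary: t l rule: less_induct)
  case less
  show ?case
  proof (rule ccontr)
    assume "\<not> ?case"
    then have empty: "\<And>p q. k \<le> p \<Longrightarrow> p \<le> i \<Longrightarrow> j \<le> q \<Longrightarrow> q \<le> l \<Longrightarrow> t p q = 1 \<Longrightarrow>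
                  (p, q) = (i, j) \<or> (p, q) = (k, l)" by blast
    obtain q0 where q0: "j < q0" "q0 < l" and unit: "\<And>p. t p (q0 - 1) + t p (q0 + 1) = t p q0"
      using sl2_tiling_empty_rectangle_unit_column[OF less.prems empty] by blast
    define t' where "t' p q = (if q < q0 then t p q else t p (q + 1))" for p q
    have "sl2_tiling t'"
      unfolding t'_def by (rule sl2_tiling_delete_column[OF less.prems(1) unit])
    moreover have "t' i j = 1" "t' k (l - 1) = 1"
      using q0 less.prems(4,5) by (simp_all add: t'_def)
    ultimately obtain p q where pq: "k \<le> p" "p \<le> i" "j \<le> q" "q \<le> l - 1" "t' p q = 1"
        "(p, q) \<noteq> (i, j)" "(p, q) \<noteq> (k, l - 1)"
      using less.hyps[of "l - 1" t'] q0 less.prems(2) by fastforce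
    show False
    proof (cases "q < q0")
      case True
      then show False using empty[of p q] pq by (simp add: t'_def)
    next
      case False
      then show False using empty[of p "q + 1"] pq q0 by (auto simp: t'_def)
    qed
  qed
qed

lemma sl2_tiling_ones_adjacent:
  assumes T: "sl2_tiling t" and one: "t p q = 1" and one': "t p' q' = 1" and "q - p < q' - p'"
    and gap: "\<And>u v. t u v = 1 \<Longrightarrow> \<not> (q - p < v - u \<and> v - u < q' - p')"
  shows "(p' < p \<and> q' = q) \<or> (p' = p \<and> q < q')"
proof -
  have le: "p' \<le> p" "q \<le> q'"
    using sl2_tiling_ones_diagonal_le[OF T one one'] \<open>q - p < q' - p'\<close> by simp_all
  have "\<not> (p' < p \<and> q < q')"
  proof
    assume "p' < p \<and> q < q'"
    then obtain u v where uv: "p' \<le> u" "u \<le> p" "q \<le> v" "v \<le> q'" "t u v = 1"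
        "(u, v) \<noteq> (p, q)" "(u, v) \<noteq> (p', q')"
      using sl2_tiling_ones_rectangle[OF T _ _ one one'] by blast
    then have "v - u = q - p \<or> v - u = q' - p'" using gap[of u v] by linarith
    then show False
      using sl2_tiling_ones_diagonal_eq[OF T uv(5) one] sl2_tiling_ones_diagonal_eq[OF T uv(5) one'] uv(6,7)
      by auto
  qed
  then show ?thesis using le \<open>q - p < q' - p'\<close> by auto
qed

section \<open>Lattice paths\<close>

lemma lattice_path_monotone:
  assumes steps: "\<And>a. step_a x y a \<or> step_b x y a"
  shows "antimono x" and "mono y"
proof -
  show "antimono x"
  proof (rule antimono_int_step)
    show "x (a + 1) \<le> x a" for a using steps[of a] by (auto simp: step_a_def step_b_def)
  qed
  show "mono y"
  proof (rule mono_int_step)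
    show "y a \<le> y (a + 1)" for a using steps[of a] by (auto simp: step_a_def step_b_def)
  qed
qed

lemma lattice_path_no_switch:
  assumes "step_a x y a \<or> step_b x y a" and "step_a x y (a + 1) \<or> step_b x y (a + 1)"
    and "\<not> switch_at x y a"
  shows "step_a x y (a + 1) = step_a x y a"
  using assms by (auto simp: switch_at_def step_a_def step_b_def)

lemma lattice_path_switches_upward:
  assumes steps: "\<And>a. step_a x y a \<or> step_b x y a"
    and beyond: "\<And>N. \<exists>b. x b < x N \<and> y N < y b"
  shows "\<exists>a\<ge>N. switch_at x y a"
proof (rule ccontr)
  assume "\<not> (\<exists>a\<ge>N. switch_at x y a)"
  then have "step_a x y (a + 1) = step_a x y a" if "N \<le> a" for a
    using lattice_path_no_switch[OF steps steps] that by simp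
  then have same: "step_a x y a = step_a x y N" if "N \<le> a" for a
    using const_from_int_step[of N "step_a x y" a] that by simp
  obtain b where b: "x b < x N" "y N < y b" using beyond by blast
  have "N < b" using b(1) antimonoD[OF lattice_path_monotone(1)[OF steps], of b N] by force
  show False
  proof (cases "step_a x y N")
    case True
    then have "y (a + 1) = y a" if "N \<le> a" for a using same that by (simp add: step_a_def)
    then show False using const_from_int_step[of N y b] b(2) \<open>N < b\<close> by simp
  next
    case False
    then have "x (a + 1) = x a" if "N \<le> a" for a using same[of a] steps[of a] that by (simp add: step_b_def)
    then show False using const_from_int_step[of N x b] b(1) \<open>N < b\<close> by simp
  qed
qed

lemma lattice_path_switches_downward:
  assumes steps: "\<And>a. step_a x y a \<or> step_b x y a"
    and beyond: "\<And>N. \<exists>b. x N < x b \<and> y b < y N"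
  shows "\<exists>a\<le>N. switch_at x y a"
proof (rule ccontr)
  assume "\<not> (\<exists>a\<le>N. switch_at x y a)"
  then have "step_a x y (a + 1) = step_a x y a" if "a < N" for a
    using lattice_path_no_switch[OF steps steps] that by simp
  then have same: "step_a x y a = step_a x y N" if "a \<le> N" for a
    using const_until_int_step[of N "step_a x y" a] that by simp
  obtain b where b: "x N < x b" "y b < y N" using beyond by blast
  have "b < N" using b(2) monoD[OF lattice_path_monotone(2)[OF steps], of N b] by force
  show False
  proof (cases "step_a x y N")
    case True
    then have "y (a + 1) = y a" if "a < N" for a using same that by (simp add: step_a_def)
    then show False using const_until_int_step[of N y b] b(2) \<open>b < N\<close> by simp
  next
    case False
    then have "x (a + 1) = x a" if "a < N" for a using same[of a] steps[of a] that by (simp add: step_b_def)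
    then show False using const_until_int_step[of N x b] b(1) \<open>b < N\<close> by simp
  qed
qed

section \<open>Parametrising the ones\<close>

definition ones_diagonals :: "(int \<Rightarrow> int \<Rightarrow> int) \<Rightarrow> int set" where
  "ones_diagonals t = {s. \<exists>p q. t p q = 1 \<and> q - p = s}"

lemma ones_diagonals_unbounded:
  assumes "enough_ones t"
  shows "\<exists>s\<in>ones_diagonals t. v < s" and "\<exists>s\<in>ones_diagonals t. s < v"
proof -
  obtain p q where "p < 0" "v < q" "t p q = 1" using assms unfolding enough_ones_def by blast
  then show "\<exists>s\<in>ones_diagonals t. v < s" unfolding ones_diagonals_def by force
  obtain p q where "0 < p" "q < v" "t p q = 1" using assms unfolding enough_ones_def by blast
  then show "\<exists>s\<in>ones_diagonals t. s < v" unfolding ones_diagonals_def by force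
qed

lemma ones_param_diagonals:
  assumes "ones_param t x y"
  shows "strict_mono (\<lambda>a. y a - x a)" and "range (\<lambda>a. y a - x a) = ones_diagonals t"
proof -
  show "strict_mono (\<lambda>a. y a - x a)"
  proof (rule strict_mono_int_step)
    fix a
    have "step_a x y a \<or> step_b x y a" using assms by (simp add: ones_param_def)
    then show "y a - x a < y (a + 1) - x (a + 1)" by (auto simp: step_a_def step_b_def)
  qed
  have "t p q = 1 \<longleftrightarrow> (\<exists>a. p = x a \<and> q = y a)" for p q
    using assms by (simp add: ones_param_def)
  then show "range (\<lambda>a. y a - x a) = ones_diagonals t"
    unfolding ones_diagonals_def by auto
qed

lemma ones_param_unique:
  assumes T: "sl2_tiling t" and op: "ones_param t x y" and op': "ones_param t x' y'"
  shows "\<exists>k. \<forall>a. x' a = x (a + k) \<and> y' a = y (a + k)"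
proof -
  obtain k where k: "\<And>a. y' a - x' a = y (a + k) - x (a + k)"
    using strict_mono_same_range_shift[OF ones_param_diagonals(1)[OF op] ones_param_diagonals(1)[OF op']]
      ones_param_diagonals(2)[OF op] ones_param_diagonals(2)[OF op'] by metis
  have "t (x a) (y a) = 1" "t (x' a) (y' a) = 1" for a
    using op op' unfolding ones_param_def by blast+
  then have "x' a = x (a + k) \<and> y' a = y (a + k)" for a
    using sl2_tiling_ones_diagonal_eq[OF T, of "x' a" "y' a" "x (a + k)" "y (a + k)"] k[of a] by simp
  then show ?thesis by blast
qed

lemma enough_ones_lattice_path_switches:
  assumes E: "enough_ones t" and ones: "\<And>p q. t p q = 1 \<longleftrightarrow> (\<exists>a. p = x a \<and> q = y a)"
    and steps: "\<And>a. step_a x y a \<or> step_b x y a"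
  shows "\<forall>N. \<exists>a\<ge>N. switch_at x y a" and "\<forall>N. \<exists>a\<le>N. switch_at x y a"
proof -
  have "\<exists>b. x b < x N \<and> y N < y b" for N
  proof -
    obtain p q where "p < x N" "y N < q" "t p q = 1" using E unfolding enough_ones_def by blast
    then show ?thesis using ones[of p q] by blast
  qed
  then show "\<forall>N. \<exists>a\<ge>N. switch_at x y a" using lattice_path_switches_upward[OF steps] by blast
  have "\<exists>b. x N < x b \<and> y b < y N" for N
  proof -
    obtain p q where "x N < p" "q < y N" "t p q = 1" using E unfolding enough_ones_def by blast
    then show ?thesis using ones[of p q] by blast
  qed
  then show "\<forall>N. \<exists>a\<le>N. switch_at x y a" using lattice_path_switches_downward[OF steps] by blast
qed

lemma ones_param_exists:
  assumes T: "sl2_tiling t" and E: "enough_ones t"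
  shows "\<exists>x y. ones_param t x y"
proof -
  obtain f :: "int \<Rightarrow> int" where f: "strict_mono f" and range_f: "range f = ones_diagonals t"
    using strict_mono_int_enumeration[OF ones_diagonals_unbounded[OF E]] by blast
  have "\<forall>a. \<exists>p q. t p q = 1 \<and> q - p = f a"
  proof
    fix a
    have "f a \<in> ones_diagonals t" using range_f by blast
    then show "\<exists>p q. t p q = 1 \<and> q - p = f a" unfolding ones_diagonals_def by simp
  qed
  then obtain x where "\<forall>a. \<exists>q. t (x a) q = 1 \<and> q - x a = f a" by metis
  then obtain y where one: "\<And>a. t (x a) (y a) = 1" and diag: "\<And>a. y a - x a = f a" by metis
  have ones: "t p q = 1 \<longleftrightarrow> (\<exists>a. p = x a \<and> q = y a)" for p q
  proof
    assume "t p q = 1"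
    then have "q - p \<in> range f" unfolding range_f ones_diagonals_def by blast
    then obtain a where "q - p = f a" by blast
    then have "p = x a \<and> q = y a"
      using sl2_tiling_ones_diagonal_eq[OF T \<open>t p q = 1\<close> one[of a]] diag[of a] by simp
    then show "\<exists>a. p = x a \<and> q = y a" by blast
  qed (use one in blast)
  have steps: "step_a x y a \<or> step_b x y a" for a
  proof -
    have "y a - x a < y (a + 1) - x (a + 1)" using diag f by (simp add: strict_mono_less)
    moreover have "\<not> (y a - x a < v - u \<and> v - u < y (a + 1) - x (a + 1))" if "t u v = 1" for u v
    proof -
      have "v - u \<in> range f" unfolding range_f ones_diagonals_def using that by blast
      then show ?thesis using strict_mono_range_step[OF f, of "v - u" a] diag by auto
    qed
    ultimately show ?thesis
      using sl2_tiling_ones_adjacent[OF T one one] unfolding step_a_def step_b_def by blast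
  qed
  show ?thesis
    using ones steps enough_ones_lattice_path_switches[OF E ones steps] unfolding ones_param_def by blast
qed

theorem proposition8p2:
  fixes t :: "int \<Rightarrow> int \<Rightarrow> int"
  assumes "sl2_tiling t" and "enough_ones t"
  shows "\<exists>x y. ones_param t x y \<and>
           (\<forall>x' y'. ones_param t x' y' \<longrightarrow> (\<exists>k. \<forall>a. x' a = x (a+k) \<and> y' a = y (a+k)))"
  using ones_param_exists[OF assms] ones_param_unique[OF assms(1)] by blast

end
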